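(* Let $k\geq1$ be an integer. (i) With $\Delta_{2k}=\{(t_1,\ldots,t_{2k})\in(0,1)^{2k}: t_1<t_2,\ t_{2i-1}<t_{2i-2},\ t_{2i-1}<t_{2i}\ (i=2,\ldots,k)\}$, \[ \zeta(2k)=\frac{1}{2(1-2^{1-2k})}\int_{\Delta_{2k}}\prod_{i=1}^{k}\frac{1}{(1-t_{2i-1})\,t_{2i}}\,dt_1\cdots dt_{2k}. \] (ii) With $\Delta_{2k+1}=\{(t_1,\ldots,t_{2k+1})\in(0,1)^{2k+1}: t_{2i}>t_{2i-1},\ t_{2i}>t_{2i+1}\ (i=1,\ldots,k)\}$, \[ \zeta(2k+1)=\frac12\int_{\Delta_{2k+1}}\prod_{i=1}^{k}\frac{1}{(1-t_{2i-1})\,t_{2i}}\cdot\frac{1}{1-t_{2k+1}}\,dt_1\cdots dt_{2k+1}. \]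
   Context: $\zeta(s)=\sum_{n\geq1}n^{-s}$ is the Riemann zeta function. *)

theory Defs
  imports "HOL-Analysis.Analysis"
begin

definition zeta :: "real \<Rightarrow> real" where
  "zeta s = (\<Sum>n. 1 / real (Suc n) powr s)"

abbreviation cube_measure :: "nat \<Rightarrow> (nat \<Rightarrow> real) measure" where
  "cube_measure n \<equiv> PiM {1..n} (\<lambda>_. lborel)"

definition Delta_even :: "nat \<Rightarrow> (nat \<Rightarrow> real) set" where
  "Delta_even k = {t \<in> space (cube_measure (2*k)).
      (\<forall>i\<in>{1..2*k}. 0 < t i \<and> t i < 1) \<and> t 1 < t 2 \<and>
      (\<forall>i\<in>{2..k}. t (2*i-1) < t (2*i-2) \<and> t (2*i-1) < t (2*i)) }"

definition Delta_odd :: "nat \<Rightarrow> (nat \<Rightarrow> real) set" where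
  "Delta_odd k = {t \<in> space (cube_measure (2*k+1)).
      (\<forall>i\<in>{1..2*k+1}. 0 < t i \<and> t i < 1) \<and>
      (\<forall>i\<in>{1..k}. t (2*i) > t (2*i-1) \<and> t (2*i) > t (2*i+1)) }"

end

theory Submission
  imports Defs
begin

text \<open>
  Write Z_N(k, m) for the sum of 1/(n_1 ... n_k)^2 over m <= n_1 <= ... <= n_k <= N.
  Both Z_N(k, 1) and sum_m Z_N(k, m)/m satisfy f(N+1, k+1) = f(N, k+1) + f(N+1, k)/(N+1)^2,
  and so does 2 sum_(j<=N) a_j c_N(j)/j^(2k) with c_N(j) = binom(2N, N-j)/binom(2N, N).
  Comparing the values at k = 0, which are telescoping sums in j, yields finite identities.
  Since c_N(j) tends to 1, they become Z(k, 1) = 2 (1 - 2^(1-2k)) zeta(2k) for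
  a_j = (-1)^(j+1) and sum_m Z(k, m)/m = 2 zeta(2k+1) for a_j = 1/j as N tends to infinity.

  Integrating out t_1, t_2, ... one at a time, the density of the last remaining variable is
  the power series sum_l x^l Z(i, l+1) after an odd and sum_l x^l/(l+1) Z(i, l+1) after an
  even number of steps; so the two integrals evaluate to Z(k, 1) and sum_m Z(k, m)/m.
\<close>

section \<open>Ratios of binomial coefficients\<close>

text \<open>For j <= N this is binom(2N, N-j) / binom(2N, N); it vanishes for j > N.\<close>
definition binom_ratio :: "nat \<Rightarrow> nat \<Rightarrow> real" where
  "binom_ratio N j = (\<Prod>i=1..j. (real N + 1 - real i) / (real N + real i))"

lemma binom_ratio_0 [simp]: "binom_ratio N 0 = 1"
  by (simp add: binom_ratio_def)

lemma binom_ratio_Suc: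
  "binom_ratio N (Suc j) = binom_ratio N j * (real N - real j) / (real N + real j + 1)"
  unfolding binom_ratio_def by (simp add: algebra_simps)

lemma binom_ratio_1 [simp]: "binom_ratio N (Suc 0) = real N / (real N + 1)"
  by (simp add: binom_ratio_def)

lemma binom_ratio_eq_0: "N < j \<Longrightarrow> binom_ratio N j = 0"
proof (induction j)
  case (Suc j)
  then show ?case by (cases "j = N") (auto simp: binom_ratio_Suc)
qed simp

lemma binom_ratio_nonneg: "0 \<le> binom_ratio N j"
proof (induction j)
  case (Suc j)
  then show ?case
    by (cases "j \<le> N") (auto simp: binom_ratio_Suc binom_ratio_eq_0)
qed simp

lemma binom_ratio_le_1: "binom_ratio N j \<le> 1"
proof (induction j)
  case (Suc j)
  have "binom_ratio N j * ((real N - real j) / (real N + real j + 1)) \<le> 1"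
  proof (cases "j \<le> N")
    case True
    then have "0 \<le> (real N - real j) / (real N + real j + 1)"
      and "(real N - real j) / (real N + real j + 1) \<le> 1"
      by (simp_all add: divide_le_eq_1)
    then show ?thesis
      using Suc binom_ratio_nonneg[of N j] by (intro mult_le_one)
  qed (simp add: binom_ratio_eq_0)
  then show ?case by (simp add: binom_ratio_Suc)
qed simp

lemma binom_ratio_Suc_left:
  "binom_ratio N j * (real N + 1)^2 = binom_ratio (Suc N) j * ((real N + 1)^2 - (real j)^2)"
proof (induction j)
  case (Suc j)
  have "binom_ratio N (Suc j) * (real N + 1)^2
      = binom_ratio N j * (real N + 1)^2 * (real N - real j) / (real N + real j + 1)"
    by (simp add: binom_ratio_Suc)
  also have "\<dots> = binom_ratio (Suc N) j * ((real N + 1)^2 - (real j)^2) * (real N - real j) / (real N + real j + 1)"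
    by (simp only: Suc.IH)
  also have "\<dots> = binom_ratio (Suc N) j * (real N + 1 - real j) * (real N - real j)"
    by (simp add: power2_eq_square field_simps)
  also have "\<dots> = binom_ratio (Suc N) (Suc j) * ((real N + 1)^2 - (real (Suc j))^2)"
    by (simp add: binom_ratio_Suc power2_eq_square field_simps)
  finally show ?case .
qed simp

lemma binom_ratio_Suc_left_diff:
  "binom_ratio (Suc N) j - binom_ratio N j = binom_ratio (Suc N) j * (real j)^2 / (real N + 1)^2"
  using binom_ratio_Suc_left[of N j] by (simp add: field_simps)

lemma binom_ratio_tendsto_1: "(\<lambda>N. binom_ratio N j) \<longlonglongrightarrow> 1"
proof -
  have "(\<lambda>N. (real N + 1 - real i) / (real N + real i)) \<longlonglongrightarrow> 1" for i
    by real_asymp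
  then have "(\<lambda>N. \<Prod>i=1..j. (real N + 1 - real i) / (real N + real i)) \<longlonglongrightarrow> (\<Prod>i=1..j. 1)"
    by (intro tendsto_prod)
  then show ?thesis by (simp add: binom_ratio_def)
qed

lemma binom_ratio_step:
  "(real N + real (Suc j)) * binom_ratio N (Suc j) = (real N - real j) * binom_ratio N j"
proof -
  have "real N + real j + 1 \<noteq> 0" by linarith
  then show ?thesis by (simp add: binom_ratio_Suc add_ac)
qed

lemma alternating_sum_binom_ratio:
  assumes "N \<ge> 1"
  shows "2 * (\<Sum>j=1..N. (-1)^Suc j * binom_ratio N j) = 1"
proof -
  define g where "g j = (-1)^j * ((real N + real j) * binom_ratio N j)" for j
  \<comment> \<open>by binom_ratio_step, 2N c_N(j) = d_j + d_(j+1) with d_j = (N + j) c_N(j)\<close>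
  have "2 * real N * (\<Sum>j=1..N. (-1)^Suc j * binom_ratio N j) = (\<Sum>j=1..N. g (Suc j) - g j)"
    unfolding sum_distrib_left
  proof (intro sum.cong refl)
    fix j
    show "2 * real N * ((-1)^Suc j * binom_ratio N j) = g (Suc j) - g j"
      unfolding g_def power_Suc binom_ratio_step by (simp add: algebra_simps)
  qed
  also have "\<dots> = g (Suc N) - g 1"
    by (rule sum_Suc_diff) simp
  also have "\<dots> = real N"
    by (simp add: g_def binom_ratio_eq_0 field_simps)
  finally show ?thesis using assms by simp
qed

lemma linear_sum_binom_ratio: "2 * (\<Sum>j=1..N. real j * binom_ratio N j) = real N"
proof -
  define g where "g j = - ((real N + real j) * binom_ratio N j)" for j
  have "2 * (\<Sum>j=1..N. real j * binom_ratio N j) = (\<Sum>j=1..N. g (Suc j) - g j)"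
    unfolding sum_distrib_left
  proof (intro sum.cong refl)
    fix j
    show "2 * (real j * binom_ratio N j) = g (Suc j) - g j"
      unfolding g_def binom_ratio_step by (simp add: algebra_simps)
  qed
  also have "\<dots> = g (Suc N) - g 1"
    by (rule sum_Suc_diff) simp
  also have "\<dots> = real N"
    by (simp add: g_def binom_ratio_eq_0 field_simps)
  finally show ?thesis .
qed

lemma harmonic_sum_binom_ratio: "2 * (\<Sum>j=1..N. binom_ratio N j / real j) = (\<Sum>m=1..N. 1 / real m)"
proof (induction N)
  case (Suc N)
  have "2 * (\<Sum>j=1..Suc N. binom_ratio (Suc N) j / real j) - 2 * (\<Sum>j=1..Suc N. binom_ratio N j / real j)
      = 2 * (\<Sum>j=1..Suc N. real j * binom_ratio (Suc N) j / (real N + 1)^2)"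
    unfolding sum_subtractf[symmetric] right_diff_distrib[symmetric] diff_divide_distrib[symmetric]
      binom_ratio_Suc_left_diff
    by (simp add: power2_eq_square mult_ac)
  also have "\<dots> = 2 * (\<Sum>j=1..Suc N. real j * binom_ratio (Suc N) j) / (real N + 1)^2"
    by (simp only: sum_divide_distrib[symmetric] times_divide_eq_right)
  also have "\<dots> = 1 / real (Suc N)"
    unfolding linear_sum_binom_ratio by (simp add: power2_eq_square add.commute)
  finally show ?case
    using Suc.IH binom_ratio_eq_0[of N "Suc N"] by simp
qed simp

section \<open>Truncated multiple zeta-star values\<close>

text \<open>
  zstar_trunc N i m is Z_N(i, m); taking the indicator of m <= N for i = 0 makes the
  recursion in N uniform.
\<close>
primrec zstar_trunc :: "nat \<Rightarrow> nat \<Rightarrow> nat \<Rightarrow> real" where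
  "zstar_trunc N 0 m = of_bool (m \<le> N)"
| "zstar_trunc N (Suc i) m = (\<Sum>n=m..N. zstar_trunc N i n / (real n)^2)"

lemma zstar_trunc_nonneg: "0 \<le> zstar_trunc N i m"
  by (induction i arbitrary: m) (auto intro!: sum_nonneg divide_nonneg_nonneg)

lemma zstar_trunc_eq_0: "N < m \<Longrightarrow> zstar_trunc N i m = 0"
  by (cases i) auto

lemma zstar_trunc_mono: "zstar_trunc N i m \<le> zstar_trunc (Suc N) i m"
proof (induction i arbitrary: m)
  case (Suc i)
  have "(\<Sum>n=m..N. zstar_trunc N i n / (real n)^2) \<le> (\<Sum>n=m..N. zstar_trunc (Suc N) i n / (real n)^2)"
    using Suc by (intro sum_mono divide_right_mono) auto
  also have "\<dots> \<le> (\<Sum>n=m..Suc N. zstar_trunc (Suc N) i n / (real n)^2)"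
    by (intro sum_mono2) (auto intro: divide_nonneg_nonneg zstar_trunc_nonneg)
  finally show ?case by simp
qed simp

lemma zstar_trunc_Suc_Suc:
  assumes "m \<le> Suc N"
  shows "zstar_trunc (Suc N) (Suc i) m = zstar_trunc N (Suc i) m + zstar_trunc (Suc N) i m / (real N + 1)^2"
  using assms
proof (induction i arbitrary: m)
  case 0
  then show ?case by (simp add: atLeastAtMostSuc_conv add.commute)
next
  case (Suc i)
  have "zstar_trunc (Suc N) (Suc (Suc i)) m
      = (\<Sum>n=m..Suc N. zstar_trunc N (Suc i) n / (real n)^2
          + zstar_trunc (Suc N) i n / (real N + 1)^2 / (real n)^2)"
    unfolding zstar_trunc.simps(2)[of "Suc N" "Suc i"]
    using Suc.IH by (intro sum.cong refl) (simp add: add_divide_distrib)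
  also have "\<dots> = (\<Sum>n=m..Suc N. zstar_trunc N (Suc i) n / (real n)^2)
        + (\<Sum>n=m..Suc N. zstar_trunc (Suc N) i n / (real n)^2) / (real N + 1)^2"
    by (simp only: sum.distrib sum_divide_distrib divide_divide_eq_left mult.commute)
  also have "(\<Sum>n=m..Suc N. zstar_trunc N (Suc i) n / (real n)^2) = zstar_trunc N (Suc (Suc i)) m"
    using Suc.prems zstar_trunc_eq_0[of N "Suc N"] by (simp add: atLeastAtMostSuc_conv)
  finally show ?case by simp
qed

definition zstar_trunc_one :: "nat \<Rightarrow> nat \<Rightarrow> real" where
  "zstar_trunc_one N k = (\<Sum>m=1..N. zstar_trunc N k m / real m)"

lemma zstar_trunc_one_Suc_Suc:
  "zstar_trunc_one (Suc N) (Suc k) = zstar_trunc_one N (Suc k) + zstar_trunc_one (Suc N) k / (real N + 1)^2"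
proof -
  have "zstar_trunc_one (Suc N) (Suc k)
      = (\<Sum>m=1..Suc N. zstar_trunc N (Suc k) m / real m + zstar_trunc (Suc N) k m / (real N + 1)^2 / real m)"
    unfolding zstar_trunc_one_def
    by (intro sum.cong refl) (simp add: zstar_trunc_Suc_Suc add_divide_distrib del: zstar_trunc.simps)
  also have "\<dots> = (\<Sum>m=1..Suc N. zstar_trunc N (Suc k) m / real m)
      + (\<Sum>m=1..Suc N. zstar_trunc (Suc N) k m / real m) / (real N + 1)^2"
    by (simp only: sum.distrib sum_divide_distrib divide_divide_eq_left mult.commute)
  also have "(\<Sum>m=1..Suc N. zstar_trunc N (Suc k) m / real m) = zstar_trunc_one N (Suc k)"
    unfolding zstar_trunc_one_def using zstar_trunc_eq_0[of N "Suc N" "Suc k"] by simp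
  finally show ?thesis unfolding zstar_trunc_one_def by simp
qed

definition binom_sum :: "(nat \<Rightarrow> real) \<Rightarrow> nat \<Rightarrow> nat \<Rightarrow> real" where
  "binom_sum a N k = 2 * (\<Sum>j=1..N. a j * binom_ratio N j / (real j)^(2*k))"

lemma binom_sum_Suc_Suc:
  "binom_sum a (Suc N) (Suc k) = binom_sum a N (Suc k) + binom_sum a (Suc N) k / (real N + 1)^2"
proof -
  have diff: "a j * binom_ratio (Suc N) j / real j ^ (2 * Suc k) - a j * binom_ratio N j / real j ^ (2 * Suc k)
      = a j * binom_ratio (Suc N) j / real j ^ (2 * k) / (real N + 1)^2" if "j \<in> {1..Suc N}" for j
  proof -
    have "real j \<noteq> 0" using that by auto
    have "a j * binom_ratio (Suc N) j / real j ^ (2 * Suc k) - a j * binom_ratio N j / real j ^ (2 * Suc k)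
        = a j * (binom_ratio (Suc N) j - binom_ratio N j) / (real j ^ (2 * k) * (real j)^2)"
      by (simp add: diff_divide_distrib right_diff_distrib power_add[symmetric])
    also have "\<dots> = a j * binom_ratio (Suc N) j / real j ^ (2 * k) / (real N + 1)^2"
      unfolding binom_ratio_Suc_left_diff using \<open>real j \<noteq> 0\<close> by simp
    finally show ?thesis .
  qed
  have extend: "(\<Sum>j=1..N. a j * binom_ratio N j / (real j)^(2 * Suc k))
      = (\<Sum>j=1..Suc N. a j * binom_ratio N j / (real j)^(2 * Suc k))"
    using binom_ratio_eq_0[of N "Suc N"] by simp
  have "binom_sum a (Suc N) (Suc k) - binom_sum a N (Suc k)
      = 2 * (\<Sum>j=1..Suc N. a j * binom_ratio (Suc N) j / real j ^ (2 * Suc k)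
                             - a j * binom_ratio N j / real j ^ (2 * Suc k))"
    unfolding binom_sum_def extend sum_subtractf right_diff_distrib ..
  also have "\<dots> = 2 * (\<Sum>j=1..Suc N. a j * binom_ratio (Suc N) j / real j ^ (2 * k) / (real N + 1)^2)"
    using diff by simp
  also have "\<dots> = binom_sum a (Suc N) k / (real N + 1)^2"
    unfolding binom_sum_def by (simp only: sum_divide_distrib[symmetric] times_divide_eq_right)
  finally show ?thesis by simp
qed

lemma double_recursion_unique:
  fixes f g :: "nat \<Rightarrow> nat \<Rightarrow> real"
  assumes "\<And>k. f 0 k = g 0 k" and "\<And>N. f N 0 = g N 0"
    and "\<And>N k. f (Suc N) (Suc k) = f N (Suc k) + f (Suc N) k / c N"
    and "\<And>N k. g (Suc N) (Suc k) = g N (Suc k) + g (Suc N) k / c N"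
  shows "f N k = g N k"
proof (induction N arbitrary: k)
  case (Suc N)
  show ?case by (induction k) (simp_all add: assms Suc.IH)
qed (rule assms(1))

lemma zstar_trunc_1_eq_binom_sum: "zstar_trunc N k 1 = binom_sum (\<lambda>j. (-1)^Suc j) N k"
proof (rule double_recursion_unique[where c = "\<lambda>N. (real N + 1)^2"])
  show "zstar_trunc 0 k 1 = binom_sum (\<lambda>j. (-1)^Suc j) 0 k" for k
    by (simp add: zstar_trunc_eq_0 binom_sum_def)
  show "zstar_trunc N 0 1 = binom_sum (\<lambda>j. (-1)^Suc j) N 0" for N
    using alternating_sum_binom_ratio[of N] by (cases "N = 0") (simp_all add: binom_sum_def)
  show "zstar_trunc (Suc N) (Suc k) 1 = zstar_trunc N (Suc k) 1 + zstar_trunc (Suc N) k 1 / (real N + 1)^2"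
    for N k by (rule zstar_trunc_Suc_Suc) simp
qed (rule binom_sum_Suc_Suc)

lemma zstar_trunc_one_eq_binom_sum: "zstar_trunc_one N k = binom_sum (\<lambda>j. 1 / real j) N k"
proof (rule double_recursion_unique[where c = "\<lambda>N. (real N + 1)^2"])
  show "zstar_trunc_one N 0 = binom_sum (\<lambda>j. 1 / real j) N 0" for N
    using harmonic_sum_binom_ratio[of N] by (simp add: zstar_trunc_one_def binom_sum_def)
qed (rule zstar_trunc_one_Suc_Suc binom_sum_Suc_Suc | simp add: zstar_trunc_one_def binom_sum_def)+

section \<open>Passage to the limit\<close>

lemma summable_inverse_Suc_power: "m \<ge> 2 \<Longrightarrow> summable (\<lambda>j. 1 / real (Suc j) ^ m)"
  using inverse_power_summable[of m] summable_Suc_iff[of "\<lambda>n. inverse (real n ^ m)"]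
  by (simp add: inverse_eq_divide)

lemma zeta_of_nat: "zeta (real m) = (\<Sum>j. 1 / real (Suc j) ^ m)"
  unfolding zeta_def by (simp add: powr_realpow)

lemma zeta_of_nat_nonneg: "m \<ge> 2 \<Longrightarrow> 0 \<le> zeta (real m)"
  unfolding zeta_of_nat by (rule suminf_nonneg[OF summable_inverse_Suc_power]) auto

lemma alternating_zeta_sum:
  assumes m: "m \<ge> 2"
  shows "(\<Sum>j. (-1)^j / real (Suc j) ^ m) = (1 - 2 / 2^m) * (\<Sum>j. 1 / real (Suc j) ^ m)"
proof -
  define z where "z j = 1 / real (Suc j) ^ m" for j
  have sz: "summable z" unfolding z_def using summable_inverse_Suc_power[OF m] .
  have sa: "summable (\<lambda>j. (-1)^j * z j)"
    by (rule summable_norm_cancel, rule summable_comparison_test[OF _ sz]) (auto simp: z_def abs_mult)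
  have "(\<lambda>j. z j - (-1)^j * z j) sums (suminf z - (\<Sum>j. (-1)^j * z j))"
    by (intro sums_diff summable_sums sz sa)
  moreover have "z n - (-1)^n * z n = 0" if "n \<notin> range (\<lambda>i. 2*i+1)" for n
  proof -
    have "even n" using that by (metis oddE range_eqI)
    then show ?thesis by simp
  qed
  ultimately have "(\<lambda>i. z (2*i+1) - (-1)^(2*i+1) * z (2*i+1)) sums (suminf z - (\<Sum>j. (-1)^j * z j))"
    by (subst sums_mono_reindex[where g="\<lambda>i. 2*i+1"]) (auto simp: strict_mono_def)
  moreover have "z (2*i+1) - (-1)^(2*i+1) * z (2*i+1) = (2 / 2^m) * z i" for i
  proof -
    have "real (Suc (2*i+1)) ^ m = 2^m * real (Suc i) ^ m"
      by (simp flip: power_mult_distrib)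
    then show ?thesis unfolding z_def by simp
  qed
  ultimately have "(\<lambda>i. (2 / 2^m) * z i) sums (suminf z - (\<Sum>j. (-1)^j * z j))" by simp
  then have "suminf z - (\<Sum>j. (-1)^j * z j) = (2 / 2^m) * suminf z"
    using sums_unique2 sums_mult[OF summable_sums[OF sz]] by blast
  then show ?thesis unfolding z_def by (simp add: algebra_simps)
qed

lemma binom_sum_tendsto:
  assumes k: "k \<ge> 1" and a: "\<And>j. \<bar>a j\<bar> \<le> 1"
  shows "(\<lambda>N. binom_sum a N k) \<longlonglongrightarrow> (\<Sum>j. 2 * a (Suc j) / real (Suc j) ^ (2*k))"
proof -
  have series: "binom_sum a N k = (\<Sum>j. 2 * a (Suc j) * binom_ratio N (Suc j) / real (Suc j) ^ (2*k))" for N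
  proof -
    have "(\<Sum>j. 2 * a (Suc j) * binom_ratio N (Suc j) / real (Suc j) ^ (2*k))
        = (\<Sum>j<N. 2 * a (Suc j) * binom_ratio N (Suc j) / real (Suc j) ^ (2*k))"
      by (rule suminf_finite) (auto simp: binom_ratio_eq_0)
    then show ?thesis
      unfolding binom_sum_def by (simp add: sum.atLeast1_atMost_eq sum_distrib_left mult.assoc)
  qed
  have "summable (\<lambda>j. 2 * (1 / real (Suc j) ^ (2*k)))"
    using summable_inverse_Suc_power[of "2*k"] k by (intro summable_mult) auto
  then have bound: "summable (\<lambda>j. 2 / real (Suc j) ^ (2*k))" by simp
  have "(\<lambda>N. \<Sum>j. 2 * a (Suc j) * binom_ratio N (Suc j) / real (Suc j) ^ (2*k))
      \<longlonglongrightarrow> (\<Sum>j. 2 * a (Suc j) / real (Suc j) ^ (2*k))"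
  proof (rule tannerys_theorem[OF _ _ bound, THEN conjunct2, THEN conjunct2])
    fix j
    show "(\<lambda>N. 2 * a (Suc j) * binom_ratio N (Suc j) / real (Suc j) ^ (2*k))
        \<longlonglongrightarrow> 2 * a (Suc j) / real (Suc j) ^ (2*k)"
      using tendsto_mult[OF tendsto_const[of "2 * a (Suc j)"] binom_ratio_tendsto_1[of "Suc j"]]
      by (intro tendsto_divide) auto
  next
    show "\<forall>\<^sub>F (j, N) in at_top \<times>\<^sub>F sequentially.
        norm (2 * a (Suc j) * binom_ratio N (Suc j) / real (Suc j) ^ (2*k)) \<le> 2 / real (Suc j) ^ (2*k)"
    proof (rule always_eventually, safe)
      fix j N
      have "\<bar>a (Suc j) * binom_ratio N (Suc j)\<bar> \<le> 1"
        using a[of "Suc j"] binom_ratio_nonneg[of N "Suc j"] binom_ratio_le_1[of N "Suc j"]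
        by (simp add: abs_mult mult_le_one)
      then show "norm (2 * a (Suc j) * binom_ratio N (Suc j) / real (Suc j) ^ (2*k)) \<le> 2 / real (Suc j) ^ (2*k)"
        by (simp add: abs_mult divide_right_mono)
    qed
  qed simp
  then show ?thesis unfolding series .
qed

lemma zstar_trunc_1_tendsto:
  assumes k: "k \<ge> 1"
  shows "(\<lambda>N. zstar_trunc N k 1) \<longlonglongrightarrow> 2 * (1 - 2 powr (1 - 2 * real k)) * zeta (real (2*k))"
proof -
  have m: "2*k \<ge> 2" using k by simp
  have summable: "summable (\<lambda>j. (-1)^j / real (Suc j) ^ (2*k))"
    by (rule summable_norm_cancel, rule summable_comparison_test[OF _ summable_inverse_Suc_power[OF m]])
       (auto simp: abs_mult)
  have "(\<lambda>N. zstar_trunc N k 1) \<longlonglongrightarrow> (\<Sum>j. 2 * (-1)^Suc (Suc j) / real (Suc j) ^ (2*k))"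
    unfolding zstar_trunc_1_eq_binom_sum by (rule binom_sum_tendsto[OF k]) simp
  also have "(\<Sum>j. 2 * (-1)^Suc (Suc j) / real (Suc j) ^ (2*k)) = 2 * (\<Sum>j. (-1)^j / real (Suc j) ^ (2*k))"
    using suminf_mult[OF summable, of 2] by (simp add: mult.assoc)
  also have "\<dots> = 2 * (1 - 2 / 2^(2*k)) * zeta (real (2*k))"
    unfolding alternating_zeta_sum[OF m] zeta_of_nat by simp
  also have "2 / 2^(2*k) = (2::real) powr (1 - 2 * real k)"
    by (simp add: powr_diff powr_realpow[symmetric])
  finally show ?thesis .
qed

lemma zstar_trunc_one_tendsto:
  assumes k: "k \<ge> 1"
  shows "(\<lambda>N. zstar_trunc_one N k) \<longlonglongrightarrow> 2 * zeta (real (2*k+1))"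
proof -
  have m: "2*k+1 \<ge> 2" using k by simp
  have "\<bar>1 / real j\<bar> \<le> 1" for j
    by (cases j) auto
  then have "(\<lambda>N. zstar_trunc_one N k) \<longlonglongrightarrow> (\<Sum>j. 2 * (1 / real (Suc j)) / real (Suc j) ^ (2*k))"
    unfolding zstar_trunc_one_eq_binom_sum by (rule binom_sum_tendsto[OF k])
  also have "(\<Sum>j. 2 * (1 / real (Suc j)) / real (Suc j) ^ (2*k)) = (\<Sum>j. 2 * (1 / real (Suc j) ^ (2*k+1)))"
    by (simp add: field_simps)
  also have "\<dots> = 2 * zeta (real (2*k+1))"
    unfolding zeta_of_nat by (rule suminf_mult[OF summable_inverse_Suc_power[OF m]])
  finally show ?thesis .
qed

text \<open>Values in ennreal make the exchanges of sums and integrals below unconditional.\<close>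
definition zstar :: "nat \<Rightarrow> nat \<Rightarrow> ennreal" where
  "zstar i m = (SUP N. ennreal (zstar_trunc N i m))"

lemma incseq_zstar_trunc: "incseq (\<lambda>N. zstar_trunc N i m)"
  by (rule incseq_SucI) (rule zstar_trunc_mono)

lemma SUP_ennreal_eq_lim:
  fixes X :: "nat \<Rightarrow> real"
  assumes "incseq X" and "X \<longlonglongrightarrow> L"
  shows "(SUP N. ennreal (X N)) = ennreal L"
proof (rule SUP_Lim)
  show "incseq (\<lambda>N. ennreal (X N))"
    using assms(1) by (auto simp: incseq_def ennreal_leI)
qed (rule tendsto_ennrealI[OF assms(2)])

lemma zstar_0: "zstar 0 m = 1"
proof -
  have "(SUP N. ennreal (of_bool (m \<le> N))) = 1"
    by (rule antisym) (auto intro: SUP_upper2[of m] SUP_least)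
  then show ?thesis unfolding zstar_def by simp
qed

lemma zstar_Suc: "zstar (Suc i) m = (\<Sum>n. ennreal (of_bool (m \<le> n) / (real n)^2) * zstar i n)"
proof -
  have "(\<Sum>n. ennreal (of_bool (m \<le> n) / (real n)^2) * zstar i n)
      = (\<Sum>n. SUP N. ennreal (of_bool (m \<le> n) / (real n)^2 * zstar_trunc N i n))"
    unfolding zstar_def SUP_mult_left_ennreal
    by (intro suminf_cong SUP_cong refl) (simp add: ennreal_mult[symmetric] zstar_trunc_nonneg)
  also have "\<dots> = (SUP N. \<Sum>n. ennreal (of_bool (m \<le> n) / (real n)^2 * zstar_trunc N i n))"
    using incseq_zstar_trunc[of i]
    by (intro ennreal_suminf_SUP_eq) (auto simp: incseq_def intro!: ennreal_leI divide_right_mono)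
  also have "\<dots> = (SUP N. ennreal (zstar_trunc N (Suc i) m))"
  proof (intro SUP_cong refl)
    fix N
    have "(\<Sum>n. ennreal (of_bool (m \<le> n) / (real n)^2 * zstar_trunc N i n))
        = (\<Sum>n<Suc N. ennreal (of_bool (m \<le> n) / (real n)^2 * zstar_trunc N i n))"
      by (rule suminf_finite) (auto simp: zstar_trunc_eq_0)
    also have "\<dots> = ennreal (\<Sum>n<Suc N. of_bool (m \<le> n) / (real n)^2 * zstar_trunc N i n)"
      by (rule sum_ennreal) (simp add: zstar_trunc_nonneg)
    also have "(\<Sum>n<Suc N. of_bool (m \<le> n) / (real n)^2 * zstar_trunc N i n) = zstar_trunc N (Suc i) m"
      by (simp only: zstar_trunc.simps) (rule sum.mono_neutral_cong_right; auto)
    finally show "(\<Sum>n. ennreal (of_bool (m \<le> n) / (real n)^2 * zstar_trunc N i n))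
        = ennreal (zstar_trunc N (Suc i) m)" .
  qed
  finally show ?thesis unfolding zstar_def by simp
qed

lemma zstar_Suc_shift: "zstar (Suc i) (Suc p) = (\<Sum>l. ennreal (of_bool (p \<le> l) / real (Suc l)^2) * zstar i (Suc l))"
proof -
  have "(\<Sum>l. ennreal (of_bool (Suc p \<le> Suc l) / real (Suc l)^2) * zstar i (Suc l))
      = (\<Sum>n. ennreal (of_bool (Suc p \<le> n) / (real n)^2) * zstar i n)"
  proof (rule suminf_mono_reindex[where g=Suc])
    show "ennreal (of_bool (Suc p \<le> n) / (real n)^2) * zstar i n = 0" if "n \<notin> range Suc" for n
      using that by (cases n) auto
  qed (simp add: strict_mono_Suc_iff)
  then show ?thesis unfolding zstar_Suc by simp
qed

lemma zstar_1_eq_zeta: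
  assumes "k \<ge> 1"
  shows "zstar k 1 = ennreal (2 * (1 - 2 powr (1 - 2 * real k)) * zeta (real (2*k)))"
  unfolding zstar_def
  by (rule SUP_ennreal_eq_lim[OF incseq_zstar_trunc zstar_trunc_1_tendsto[OF assms]])

lemma suminf_zstar_divide_eq_zeta:
  assumes "k \<ge> 1"
  shows "(\<Sum>m. ennreal (1 / real (Suc m)) * zstar k (Suc m)) = ennreal (2 * zeta (real (2*k+1)))"
proof -
  have "(\<Sum>m. ennreal (1 / real (Suc m)) * zstar k (Suc m))
      = (\<Sum>m. SUP N. ennreal (zstar_trunc N k (Suc m) / real (Suc m)))"
    unfolding zstar_def SUP_mult_left_ennreal
    by (intro suminf_cong SUP_cong refl) (simp add: ennreal_mult[symmetric] zstar_trunc_nonneg)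
  also have "\<dots> = (SUP N. \<Sum>m. ennreal (zstar_trunc N k (Suc m) / real (Suc m)))"
    using incseq_zstar_trunc[of k]
    by (intro ennreal_suminf_SUP_eq) (auto simp: incseq_def intro!: ennreal_leI divide_right_mono)
  also have "\<dots> = (SUP N. ennreal (zstar_trunc_one N k))"
  proof (intro SUP_cong refl)
    fix N
    have "(\<Sum>m. ennreal (zstar_trunc N k (Suc m) / real (Suc m)))
        = (\<Sum>m<N. ennreal (zstar_trunc N k (Suc m) / real (Suc m)))"
      by (rule suminf_finite) (auto simp: zstar_trunc_eq_0)
    also have "\<dots> = ennreal (\<Sum>m<N. zstar_trunc N k (Suc m) / real (Suc m))"
      by (rule sum_ennreal) (simp add: zstar_trunc_nonneg)
    finally show "(\<Sum>m. ennreal (zstar_trunc N k (Suc m) / real (Suc m))) = ennreal (zstar_trunc_one N k)"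
      by (simp add: zstar_trunc_one_def sum.atLeast1_atMost_eq)
  qed
  also have "\<dots> = ennreal (2 * zeta (real (2*k+1)))"
  proof (rule SUP_ennreal_eq_lim[OF _ zstar_trunc_one_tendsto[OF assms]])
    show "incseq (\<lambda>N. zstar_trunc_one N k)"
    proof (rule incseq_SucI)
      fix N
      have "zstar_trunc_one N k \<le> (\<Sum>m=1..N. zstar_trunc (Suc N) k m / real m)"
        unfolding zstar_trunc_one_def by (intro sum_mono divide_right_mono zstar_trunc_mono) auto
      also have "\<dots> \<le> zstar_trunc_one (Suc N) k"
        unfolding zstar_trunc_one_def
        by (intro sum_mono2) (auto intro: divide_nonneg_nonneg zstar_trunc_nonneg)
      finally show "zstar_trunc_one N k \<le> zstar_trunc_one (Suc N) k" .
    qed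
  qed
  finally show ?thesis .
qed

section \<open>Iterated integrals over zigzag chains\<close>

lemma nn_integral_power_interval:
  fixes a b :: real
  assumes "0 \<le> a" "a \<le> b"
  shows "(\<integral>\<^sup>+x. ennreal (x^l) * indicator {a<..<b} x \<partial>lborel) = ennreal ((b^Suc l - a^Suc l) / real (Suc l))"
proof (rule nn_integral_has_integral_lebesgue')
  have "((\<lambda>x. x^l) has_integral (b^Suc l / real (Suc l) - a^Suc l / real (Suc l))) {a..b}"
  proof (rule fundamental_theorem_of_calculus[OF assms(2)])
    fix x :: real
    have "((\<lambda>x. x^Suc l / real (Suc l)) has_real_derivative real (Suc l) * x^l / real (Suc l)) (at x)"
      by (intro DERIV_cdivide) (use DERIV_pow[of "Suc l" x] in simp)
    then show "((\<lambda>x. x^Suc l / real (Suc l)) has_vector_derivative x^l) (at x within {a..b})"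
      by (simp add: has_real_derivative_iff_has_vector_derivative[symmetric] has_field_derivative_at_within)
  qed
  then have "((\<lambda>x. x^l) has_integral ((b^Suc l - a^Suc l) / real (Suc l))) (cbox a b)"
    by (simp add: diff_divide_distrib)
  then show "((\<lambda>x. x^l) has_integral ((b^Suc l - a^Suc l) / real (Suc l))) {a<..<b}"
    by (subst box_real(1)[symmetric]) (rule has_integral_open_interval[THEN iffD2])
qed (use assms in auto)

lemma nn_integral_power_series_interval:
  fixes a b :: real
  assumes "0 \<le> a" "a \<le> b"
  shows "(\<integral>\<^sup>+x. (\<Sum>l. ennreal (x^l) * c l) * indicator {a<..<b} x \<partial>lborel)
       = (\<Sum>l. ennreal ((b^Suc l - a^Suc l) / real (Suc l)) * c l)"
proof -
  have "(\<integral>\<^sup>+x. (\<Sum>l. ennreal (x^l) * c l) * indicator {a<..<b} x \<partial>lborel)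
      = (\<integral>\<^sup>+x. (\<Sum>l. (ennreal (x^l) * indicator {a<..<b} x) * c l) \<partial>lborel)"
    by (simp only: ennreal_suminf_multc[symmetric] ennreal_suminf_cmult[symmetric] mult_ac)
  also have "\<dots> = (\<Sum>l. \<integral>\<^sup>+x. (ennreal (x^l) * indicator {a<..<b} x) * c l \<partial>lborel)"
    by (rule nn_integral_suminf) measurable
  also have "\<dots> = (\<Sum>l. ennreal ((b^Suc l - a^Suc l) / real (Suc l)) * c l)"
    using assms by (simp add: nn_integral_multc nn_integral_power_interval)
  finally show ?thesis .
qed

definition gen_odd :: "nat \<Rightarrow> real \<Rightarrow> ennreal" where
  "gen_odd i z = (\<Sum>l. ennreal (z^l) * zstar i (Suc l)) * indicator {0<..<1} z"

definition gen_even :: "nat \<Rightarrow> real \<Rightarrow> ennreal" where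
  "gen_even i y = (\<Sum>l. ennreal (y^l) * (ennreal (1 / real (Suc l)) * zstar i (Suc l))) * indicator {0<..<1} y"

lemma gen_odd_measurable [measurable]: "gen_odd i \<in> borel_measurable borel"
  unfolding gen_odd_def by measurable

lemma gen_even_measurable [measurable]: "gen_even i \<in> borel_measurable borel"
  unfolding gen_even_def by measurable

lemma gen_odd_0: "gen_odd 0 z = ennreal (1 / (1 - z)) * indicator {0<..<1} z"
proof (cases "z \<in> {0<..<1}")
  case True
  then have "(\<Sum>l. ennreal (z^l)) = ennreal (\<Sum>l. z^l)"
    by (intro suminf_ennreal2 summable_geometric) auto
  also have "\<dots> = ennreal (1 / (1 - z))"
    using True by (simp add: suminf_geometric)
  finally show ?thesis unfolding gen_odd_def zstar_0 by simp
qed (simp add: gen_odd_def)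

lemma gen_even_eq_integral:
  "gen_even i y = ennreal (1 / y) * indicator {0<..<1} y * (\<integral>\<^sup>+x. gen_odd i x * of_bool (x < y) \<partial>lborel)"
proof (cases "y \<in> {0<..<1}")
  case True
  then have y: "0 < y" "y < 1" by auto
  have "(\<integral>\<^sup>+x. gen_odd i x * of_bool (x < y) \<partial>lborel)
      = (\<integral>\<^sup>+x. (\<Sum>l. ennreal (x^l) * zstar i (Suc l)) * indicator {0<..<y} x \<partial>lborel)"
    unfolding gen_odd_def using y by (intro nn_integral_cong) (auto simp: indicator_def)
  also have "\<dots> = (\<Sum>l. ennreal (y^Suc l / real (Suc l)) * zstar i (Suc l))"
    using y by (simp add: nn_integral_power_series_interval)
  finally have "ennreal (1 / y) * (\<integral>\<^sup>+x. gen_odd i x * of_bool (x < y) \<partial>lborel)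
      = (\<Sum>l. ennreal (1 / y) * ennreal (y^Suc l / real (Suc l)) * zstar i (Suc l))"
    by (simp add: mult.assoc)
  also have "\<dots> = (\<Sum>l. ennreal (y^l) * (ennreal (1 / real (Suc l)) * zstar i (Suc l)))"
  proof (intro suminf_cong)
    fix l
    have "ennreal (1 / y) * ennreal (y^Suc l / real (Suc l)) = ennreal (y^l) * ennreal (1 / real (Suc l))"
      using y by (simp add: ennreal_mult[symmetric])
    then show "ennreal (1 / y) * ennreal (y^Suc l / real (Suc l)) * zstar i (Suc l)
        = ennreal (y^l) * (ennreal (1 / real (Suc l)) * zstar i (Suc l))"
      by (simp add: mult.assoc[symmetric])
  qed
  finally show ?thesis unfolding gen_even_def using True by simp
qed (simp add: gen_even_def)

lemma ennreal_suminf_swap: "(\<Sum>l. \<Sum>p. f l p) = (\<Sum>p. \<Sum>l. f l p :: ennreal)"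
proof -
  have "(\<Sum>l. \<Sum>p. f l p) = (\<integral>\<^sup>+l. (\<integral>\<^sup>+p. f l p \<partial>count_space UNIV) \<partial>count_space UNIV)"
    by (simp add: nn_integral_count_space_nat)
  also have "\<dots> = (\<integral>\<^sup>+p. (\<integral>\<^sup>+l. f l p \<partial>count_space UNIV) \<partial>count_space UNIV)"
    by (rule pair_sigma_finite.Fubini') (auto simp: pair_sigma_finite_def sigma_finite_measure_count_space)
  also have "\<dots> = (\<Sum>p. \<Sum>l. f l p)"
    by (simp add: nn_integral_count_space_nat)
  finally show ?thesis .
qed

lemma ennreal_geometric_coefficient:
  fixes z :: real
  assumes "0 < z" "z < 1"
  shows "ennreal (1 / (1 - z)) * (ennreal ((1 - z^Suc l) / real (Suc l)) * (ennreal (1 / real (Suc l)) * c))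
       = (\<Sum>p. ennreal (z^p) * (ennreal (of_bool (p \<le> l) / real (Suc l)^2) * c))"
proof -
  have "z^Suc l \<le> 1"
    using assms by (intro power_le_one) auto
  have geometric: "(\<Sum>p<Suc l. z^p) = (1 - z^Suc l) / (1 - z)"
    using assms by (subst sum_gp_strict) simp
  have "ennreal (1 / (1 - z)) * ennreal ((1 - z^Suc l) / real (Suc l)) * ennreal (1 / real (Suc l))
      = ennreal (1 / (1 - z) * ((1 - z^Suc l) / real (Suc l)) * (1 / real (Suc l)))"
    using \<open>z^Suc l \<le> 1\<close> by (simp add: ennreal_mult''[symmetric])
  also have "1 / (1 - z) * ((1 - z^Suc l) / real (Suc l)) * (1 / real (Suc l)) = (\<Sum>p<Suc l. z^p) / real (Suc l)^2"
    unfolding geometric by (simp add: power2_eq_square)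
  also have "ennreal \<dots> = (\<Sum>p<Suc l. ennreal (z^p) * ennreal (of_bool (p \<le> l) / real (Suc l)^2))"
    using assms by (simp add: sum_divide_distrib sum_ennreal ennreal_mult[symmetric] del: sum.lessThan_Suc)
  also have "\<dots> = (\<Sum>p. ennreal (z^p) * ennreal (of_bool (p \<le> l) / real (Suc l)^2))"
    by (rule suminf_finite[symmetric]) auto
  finally show ?thesis
    by (simp add: mult.assoc[symmetric])
qed

lemma gen_odd_Suc_eq_integral:
  "gen_odd (Suc i) z = ennreal (1 / (1 - z)) * indicator {0<..<1} z * (\<integral>\<^sup>+y. gen_even i y * of_bool (z < y) \<partial>lborel)"
proof (cases "z \<in> {0<..<1}")
  case True
  then have z: "0 < z" "z < 1" by auto
  have "(\<integral>\<^sup>+y. gen_even i y * of_bool (z < y) \<partial>lborel)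
      = (\<integral>\<^sup>+y. (\<Sum>l. ennreal (y^l) * (ennreal (1 / real (Suc l)) * zstar i (Suc l))) * indicator {z<..<1} y \<partial>lborel)"
    unfolding gen_even_def using z by (intro nn_integral_cong) (auto simp: indicator_def)
  also have "\<dots> = (\<Sum>l. ennreal ((1 - z^Suc l) / real (Suc l)) * (ennreal (1 / real (Suc l)) * zstar i (Suc l)))"
    using z by (simp add: nn_integral_power_series_interval)
  finally have "ennreal (1 / (1 - z)) * (\<integral>\<^sup>+y. gen_even i y * of_bool (z < y) \<partial>lborel)
      = (\<Sum>l. ennreal (1 / (1 - z)) * (ennreal ((1 - z^Suc l) / real (Suc l)) * (ennreal (1 / real (Suc l)) * zstar i (Suc l))))"
    by simp
  also have "\<dots> = (\<Sum>l. \<Sum>p. ennreal (z^p) * (ennreal (of_bool (p \<le> l) / real (Suc l)^2) * zstar i (Suc l)))"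
    using z by (simp only: ennreal_geometric_coefficient)
  also have "\<dots> = (\<Sum>p. ennreal (z^p) * zstar (Suc i) (Suc p))"
    unfolding ennreal_suminf_swap[where f = "\<lambda>l p. ennreal (z^p) * _ l p"] zstar_Suc_shift by simp
  finally show ?thesis unfolding gen_odd_def using True by simp
qed (simp add: gen_odd_def)

lemma nn_integral_gen_even: "(\<integral>\<^sup>+y. gen_even i y \<partial>lborel) = zstar (Suc i) 1"
proof -
  have "(\<integral>\<^sup>+y. gen_even i y \<partial>lborel)
      = (\<Sum>l. ennreal (1 / real (Suc l)) * (ennreal (1 / real (Suc l)) * zstar i (Suc l)))"
    unfolding gen_even_def by (simp add: nn_integral_power_series_interval)
  also have "\<dots> = zstar (Suc i) (Suc 0)"
    unfolding zstar_Suc_shift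
    by (intro suminf_cong) (simp add: ennreal_mult[symmetric] mult.assoc[symmetric] power2_eq_square)
  finally show ?thesis by simp
qed

lemma nn_integral_gen_odd: "(\<integral>\<^sup>+z. gen_odd i z \<partial>lborel) = (\<Sum>l. ennreal (1 / real (Suc l)) * zstar i (Suc l))"
  unfolding gen_odd_def by (simp add: nn_integral_power_series_interval)

definition chain_set :: "(nat \<Rightarrow> real \<Rightarrow> real \<Rightarrow> bool) \<Rightarrow> nat \<Rightarrow> (nat \<Rightarrow> real) set" where
  "chain_set R n = {t \<in> space (cube_measure n).
     (\<forall>i\<in>{1..n}. 0 < t i \<and> t i < 1) \<and> (\<forall>j\<in>{1..<n}. R j (t j) (t (Suc j)))}"

lemma chain_set_sets [measurable]:
  assumes [measurable]: "\<And>j. Measurable.pred (borel \<Otimes>\<^sub>M borel) (\<lambda>(x, y). R j x y)"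
  shows "chain_set R n \<in> sets (cube_measure n)"
  unfolding chain_set_def by measurable

lemma indicator_chain_set_Suc:
  assumes "n \<ge> 1" and x: "x \<in> space (cube_measure n)"
  shows "indicator (chain_set R (Suc n)) (x(Suc n := y))
    = (indicator (chain_set R n) x * indicator {0<..<1} y * of_bool (R n (x n) y) :: ennreal)"
proof -
  have "x(Suc n := y) \<in> space (cube_measure (Suc n))"
    using x by (auto simp: space_PiM PiE_def extensional_def)
  moreover have "{1..<Suc n} = insert n {1..<n}"
    using assms(1) by auto
  ultimately have "x(Suc n := y) \<in> chain_set R (Suc n) \<longleftrightarrow> x \<in> chain_set R n \<and> 0 < y \<and> y < 1 \<and> R n (x n) y"
    using x by (auto simp: chain_set_def atLeastAtMostSuc_conv)
  then show ?thesis by (auto simp: indicator_def)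
qed

lemma nn_integral_chain_set_1:
  assumes [measurable]: "w \<in> borel_measurable borel" "h \<in> borel_measurable borel"
  shows "(\<integral>\<^sup>+t. indicator (chain_set R 1) t * w (t 1) * h (t 1) \<partial>cube_measure 1)
       = (\<integral>\<^sup>+y. indicator {0<..<1} y * w y * h y \<partial>lborel)"
proof -
  have "(\<integral>\<^sup>+t. indicator (chain_set R 1) t * w (t 1) * h (t 1) \<partial>cube_measure 1)
      = (\<integral>\<^sup>+t. indicator {0<..<1} (t 1) * w (t 1) * h (t 1) \<partial>PiM {1::nat} (\<lambda>_. lborel))"
  proof (subst atLeastAtMost_singleton, rule nn_integral_cong)
    fix t assume "t \<in> space (PiM {1::nat} (\<lambda>_. lborel :: real measure))"
    then have "indicator (chain_set R 1) t = (indicator {0<..<1} (t 1) :: ennreal)"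
      by (auto simp: chain_set_def indicator_def)
    then show "indicator (chain_set R 1) t * w (t 1) * h (t 1) = indicator {0<..<1} (t 1) * w (t 1) * h (t 1)"
      by simp
  qed
  also have "\<dots> = (\<integral>\<^sup>+y. indicator {0<..<1} y * w y * h y \<partial>lborel)"
    by (rule product_sigma_finite.product_nn_integral_singleton) (unfold_locales, measurable)
  finally show ?thesis .
qed

lemma nn_integral_chain_set_Suc:
  assumes "n \<ge> 1"
    and [measurable]: "\<And>j. w j \<in> borel_measurable borel" "h \<in> borel_measurable borel"
    and [measurable]: "\<And>j. Measurable.pred (borel \<Otimes>\<^sub>M borel) (\<lambda>(x, y). R j x y)"
  shows "(\<integral>\<^sup>+t. indicator (chain_set R (Suc n)) t * (\<Prod>j\<in>{1..Suc n}. w j (t j)) * h (t (Suc n)) \<partial>cube_measure (Suc n))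
       = (\<integral>\<^sup>+x. indicator (chain_set R n) x * (\<Prod>j\<in>{1..n}. w j (x j))
            * (\<integral>\<^sup>+y. indicator {0<..<1} y * of_bool (R n (x n) y) * w (Suc n) y * h y \<partial>lborel) \<partial>cube_measure n)"
proof -
  interpret product_sigma_finite "\<lambda>_::nat. lborel :: real measure" by standard
  have "(\<lambda>t. indicator (chain_set R (Suc n)) t * (\<Prod>j\<in>{1..Suc n}. w j (t j)) * h (t (Suc n)))
      \<in> borel_measurable (cube_measure (Suc n))"
    by measurable
  moreover have "{1..Suc n} = insert (Suc n) {1..n}"
    by auto
  ultimately have "(\<integral>\<^sup>+t. indicator (chain_set R (Suc n)) t * (\<Prod>j\<in>{1..Suc n}. w j (t j)) * h (t (Suc n)) \<partial>cube_measure (Suc n))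
      = (\<integral>\<^sup>+x. (\<integral>\<^sup>+y. indicator (chain_set R (Suc n)) (x(Suc n := y))
            * (\<Prod>j\<in>{1..Suc n}. w j ((x(Suc n := y)) j)) * h ((x(Suc n := y)) (Suc n)) \<partial>lborel) \<partial>cube_measure n)"
    by (simp only:) (intro product_nn_integral_insert; simp)
  also have "\<dots> = (\<integral>\<^sup>+x. indicator (chain_set R n) x * (\<Prod>j\<in>{1..n}. w j (x j))
            * (\<integral>\<^sup>+y. indicator {0<..<1} y * of_bool (R n (x n) y) * w (Suc n) y * h y \<partial>lborel) \<partial>cube_measure n)"
  proof (rule nn_integral_cong)
    fix x assume x: "x \<in> space (cube_measure n)"
    have "(\<Prod>j\<in>{1..Suc n}. w j ((x(Suc n := y)) j)) = (\<Prod>j\<in>{1..n}. w j (x j)) * w (Suc n) y" for y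
      by (simp add: atLeastAtMostSuc_conv mult.commute)
    then show "(\<integral>\<^sup>+y. indicator (chain_set R (Suc n)) (x(Suc n := y))
            * (\<Prod>j\<in>{1..Suc n}. w j ((x(Suc n := y)) j)) * h ((x(Suc n := y)) (Suc n)) \<partial>lborel)
        = indicator (chain_set R n) x * (\<Prod>j\<in>{1..n}. w j (x j))
            * (\<integral>\<^sup>+y. indicator {0<..<1} y * of_bool (R n (x n) y) * w (Suc n) y * h y \<partial>lborel)"
      by (simp add: indicator_chain_set_Suc[OF assms(1) x] nn_integral_cmult[symmetric] mult_ac)
  qed
  finally show ?thesis .
qed

lemma nn_integral_chain_set_last:
  fixes w F :: "nat \<Rightarrow> real \<Rightarrow> ennreal"
  assumes [measurable]: "\<And>j. w j \<in> borel_measurable borel" "\<And>n. F n \<in> borel_measurable borel"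
    and [measurable]: "\<And>j. Measurable.pred (borel \<Otimes>\<^sub>M borel) (\<lambda>(x, y). R j x y)"
    and F_1: "\<And>y. F 1 y = w 1 y * indicator {0<..<1} y"
    and F_Suc: "\<And>n y. n \<ge> 1 \<Longrightarrow>
      F (Suc n) y = w (Suc n) y * indicator {0<..<1} y * (\<integral>\<^sup>+x. F n x * of_bool (R n x y) \<partial>lborel)"
    and "n \<ge> 1" and [measurable]: "h \<in> borel_measurable borel"
  shows "(\<integral>\<^sup>+t. indicator (chain_set R n) t * (\<Prod>j\<in>{1..n}. w j (t j)) * h (t n) \<partial>cube_measure n)
       = (\<integral>\<^sup>+y. F n y * h y \<partial>lborel)"
  using \<open>n \<ge> 1\<close> \<open>h \<in> borel_measurable borel\<close>
proof (induction n arbitrary: h rule: dec_induct)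
  case base
  have "(\<integral>\<^sup>+t. indicator (chain_set R 1) t * (\<Prod>j\<in>{1..1}. w j (t j)) * h (t 1) \<partial>cube_measure 1)
      = (\<integral>\<^sup>+t. indicator (chain_set R 1) t * w 1 (t 1) * h (t 1) \<partial>cube_measure 1)"
    by simp
  also have "\<dots> = (\<integral>\<^sup>+y. indicator {0<..<1} y * w 1 y * h y \<partial>lborel)"
    using base by (intro nn_integral_chain_set_1) simp_all
  finally show ?case
    unfolding F_1 by (simp add: mult_ac)
next
  case (step n)
  note [measurable] = step.prems
  define g where "g u = (\<integral>\<^sup>+y. indicator {0<..<1} y * of_bool (R n u y) * w (Suc n) y * h y \<partial>lborel)" for u
  have "(\<integral>\<^sup>+t. indicator (chain_set R (Suc n)) t * (\<Prod>j\<in>{1..Suc n}. w j (t j)) * h (t (Suc n)) \<partial>cube_measure (Suc n))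
      = (\<integral>\<^sup>+x. indicator (chain_set R n) x * (\<Prod>j\<in>{1..n}. w j (x j)) * g (x n) \<partial>cube_measure n)"
    unfolding g_def by (rule nn_integral_chain_set_Suc[OF step.hyps(1)]) measurable
  also have "\<dots> = (\<integral>\<^sup>+u. F n u * g u \<partial>lborel)"
    by (rule step.IH) (measurable, simp add: g_def)
  also have "\<dots> = (\<integral>\<^sup>+u. (\<integral>\<^sup>+y. F n u * (indicator {0<..<1} y * of_bool (R n u y) * w (Suc n) y * h y) \<partial>lborel) \<partial>lborel)"
    unfolding g_def by (intro nn_integral_cong nn_integral_cmult[symmetric]) measurable
  also have "\<dots> = (\<integral>\<^sup>+y. (\<integral>\<^sup>+u. F n u * (indicator {0<..<1} y * of_bool (R n u y) * w (Suc n) y * h y) \<partial>lborel) \<partial>lborel)"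
    by (rule lborel_pair.Fubini'[symmetric]) measurable
  also have "\<dots> = (\<integral>\<^sup>+y. (w (Suc n) y * indicator {0<..<1} y * h y) * (\<integral>\<^sup>+u. F n u * of_bool (R n u y) \<partial>lborel) \<partial>lborel)"
    by (intro nn_integral_cong, subst nn_integral_cmult[symmetric]) (measurable, simp_all add: mult_ac)
  also have "\<dots> = (\<integral>\<^sup>+y. F (Suc n) y * h y \<partial>lborel)"
    using step.hyps(1) by (simp add: F_Suc mult_ac)
  finally show ?case .
qed

text \<open>
  Delta_even k and Delta_odd k are the chains t_1 < t_2 > t_3 < t_4 > ... of length 2k and
  2k+1 in the open unit cube.
\<close>
definition zigzag :: "nat \<Rightarrow> real \<Rightarrow> real \<Rightarrow> bool" where
  "zigzag j x y \<longleftrightarrow> (if odd j then x < y else y < x)"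

definition zigzag_weight :: "nat \<Rightarrow> real \<Rightarrow> real" where
  "zigzag_weight j y = (if odd j then 1 / (1 - y) else 1 / y)"

definition zigzag_density :: "nat \<Rightarrow> real \<Rightarrow> ennreal" where
  "zigzag_density n = (if odd n then gen_odd (n div 2) else gen_even (n div 2 - 1))"

lemma zigzag_measurable [measurable]: "Measurable.pred (borel \<Otimes>\<^sub>M borel) (\<lambda>(x, y). zigzag j x y)"
  unfolding zigzag_def by measurable

lemma zigzag_weight_measurable [measurable]: "zigzag_weight j \<in> borel_measurable borel"
  unfolding zigzag_weight_def by measurable

lemma zigzag_density_measurable [measurable]: "zigzag_density n \<in> borel_measurable borel"
  unfolding zigzag_density_def by (cases "odd n") simp_all

lemma zigzag_density_1: "zigzag_density 1 y = ennreal (zigzag_weight 1 y) * indicator {0<..<1} y"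
  by (simp add: zigzag_density_def zigzag_weight_def gen_odd_0)

lemma zigzag_density_Suc:
  assumes "n \<ge> 1"
  shows "zigzag_density (Suc n) y = ennreal (zigzag_weight (Suc n) y) * indicator {0<..<1} y
           * (\<integral>\<^sup>+x. zigzag_density n x * of_bool (zigzag n x y) \<partial>lborel)"
proof (cases "odd n")
  case True
  then obtain i where "n = 2*i+1" by (rule oddE)
  then show ?thesis
    by (simp add: zigzag_density_def zigzag_weight_def zigzag_def gen_even_eq_integral)
next
  case False
  then obtain m where "n = 2*m"
    by (auto elim: evenE)
  with assms obtain i where "n = 2*i+2"
    by (cases m) auto
  then show ?thesis
    by (simp add: zigzag_density_def zigzag_weight_def zigzag_def gen_odd_Suc_eq_integral)
qed

lemma nn_integral_chain_set_zigzag: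
  assumes "n \<ge> 1"
  shows "(\<integral>\<^sup>+t \<in> chain_set zigzag n. ennreal (\<Prod>j\<in>{1..n}. zigzag_weight j (t j)) \<partial>cube_measure n)
       = (\<integral>\<^sup>+y. zigzag_density n y \<partial>lborel)"
proof -
  have "(\<integral>\<^sup>+t \<in> chain_set zigzag n. ennreal (\<Prod>j\<in>{1..n}. zigzag_weight j (t j)) \<partial>cube_measure n)
      = (\<integral>\<^sup>+t. indicator (chain_set zigzag n) t * (\<Prod>j\<in>{1..n}. ennreal (zigzag_weight j (t j))) * 1 \<partial>cube_measure n)"
  proof (rule nn_integral_cong)
    fix t
    have "(\<Prod>j\<in>{1..n}. ennreal (zigzag_weight j (t j))) = ennreal (\<Prod>j\<in>{1..n}. zigzag_weight j (t j))"
      if "t \<in> chain_set zigzag n"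
      using that by (intro prod_ennreal) (auto simp: chain_set_def zigzag_weight_def less_imp_le)
    then show "ennreal (\<Prod>j\<in>{1..n}. zigzag_weight j (t j)) * indicator (chain_set zigzag n) t
        = indicator (chain_set zigzag n) t * (\<Prod>j\<in>{1..n}. ennreal (zigzag_weight j (t j))) * 1"
      by (simp add: indicator_def)
  qed
  also have "\<dots> = (\<integral>\<^sup>+y. zigzag_density n y * 1 \<partial>lborel)"
    using zigzag_density_1 zigzag_density_Suc assms
    by (intro nn_integral_chain_set_last[where F = zigzag_density]) measurable
  finally show ?thesis by simp
qed

lemma prod_atLeastAtMost_pairs:
  fixes f :: "nat \<Rightarrow> 'a::comm_monoid_mult"
  shows "(\<Prod>j=1..2*k. f j) = (\<Prod>i=1..k. f (2*i-1) * f (2*i))"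
proof (induction k)
  case (Suc k)
  have "{1..2 * Suc k} = insert (2*k+2) (insert (2*k+1) {1..2*k})"
    by auto
  then show ?case
    using Suc.IH by (simp add: mult_ac)
qed simp

lemma prod_zigzag_weight_even:
  "(\<Prod>j=1..2*k. zigzag_weight j (t j)) = (\<Prod>i=1..k. 1 / ((1 - t (2*i-1)) * t (2*i)))"
  unfolding prod_atLeastAtMost_pairs by (intro prod.cong) (auto simp: zigzag_weight_def)

lemma prod_zigzag_weight_odd:
  "(\<Prod>j=1..2*k+1. zigzag_weight j (t j)) = (\<Prod>i=1..k. 1 / ((1 - t (2*i-1)) * t (2*i))) * (1 / (1 - t (2*k+1)))"
proof -
  have "(\<Prod>j=1..2*k+1. zigzag_weight j (t j)) = zigzag_weight (2*k+1) (t (2*k+1)) * (\<Prod>j=1..2*k. zigzag_weight j (t j))"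
    by (simp add: prod.nat_ivl_Suc')
  then show ?thesis
    unfolding prod_zigzag_weight_even by (simp add: zigzag_weight_def mult.commute)
qed

lemma Delta_odd_constraints_iff_zigzag:
  "(\<forall>i\<in>{1..k}. t (2*i) > t (2*i-1) \<and> t (2*i) > t (2*i+1)) \<longleftrightarrow>
         (\<forall>j\<in>{1..<2*k+1}. zigzag j (t j) (t (Suc j)))" (is "?D \<longleftrightarrow> ?C")
proof
  assume ?D
  show ?C
  proof
    fix j assume "j \<in> {1..<2*k+1}"
    then show "zigzag j (t j) (t (Suc j))"
      using \<open>?D\<close>[rule_format, of "(j+1) div 2"] by (cases "odd j") (auto simp: zigzag_def elim!: oddE evenE)
  qed
next
  assume ?C
  show ?D
  proof
    fix i assume "i \<in> {1..k}"
    then obtain m where i: "i = Suc m" "m < k"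
      by (cases i) auto
    then show "t (2*i) > t (2*i-1) \<and> t (2*i) > t (2*i+1)"
      using \<open>?C\<close>[rule_format, of "2*m+1"] \<open>?C\<close>[rule_format, of "2*m+2"] by (auto simp: zigzag_def)
  qed
qed

lemma Delta_even_constraints_iff_zigzag:
  assumes "k \<ge> 1"
  shows "(t 1 < t 2 \<and> (\<forall>i\<in>{2..k}. t (2*i-1) < t (2*i-2) \<and> t (2*i-1) < t (2*i))) \<longleftrightarrow>
         (\<forall>j\<in>{1..<2*k}. zigzag j (t j) (t (Suc j)))" (is "?D \<longleftrightarrow> ?C")
proof
  assume ?D
  show ?C
  proof
    fix j assume j: "j \<in> {1..<2*k}"
    have peaks: "t (2*i-1) < t (2*i-2) \<and> t (2*i-1) < t (2*i)" if "i \<in> {2..k}" for i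
      using \<open>?D\<close> that by blast
    show "zigzag j (t j) (t (Suc j))"
    proof (cases "odd j")
      case True
      then obtain m where m: "j = 2*m+1" by (rule oddE)
      show ?thesis
      proof (cases "m = 0")
        case True
        then show ?thesis using \<open>?D\<close> m by (simp add: zigzag_def numeral_2_eq_2)
      next
        case False
        then show ?thesis using peaks[of "m+1"] m j by (auto simp: zigzag_def)
      qed
    next
      case False
      then obtain m where "j = 2*m" by (auto elim: evenE)
      then show ?thesis
        using peaks[of "m+1"] j by (auto simp: zigzag_def)
    qed
  qed
next
  assume ?C
  have "t 1 < t 2"
    using \<open>?C\<close>[rule_format, of 1] assms by (simp add: zigzag_def numeral_2_eq_2)
  moreover have "t (2*i-1) < t (2*i-2) \<and> t (2*i-1) < t (2*i)" if "i \<in> {2..k}" for i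
  proof -
    define m where "m = i - 2"
    then have i: "i = m + 2" "m + 2 \<le> k"
      using that by auto
    show ?thesis
      using \<open>?C\<close>[rule_format, of "2*m+2"] \<open>?C\<close>[rule_format, of "Suc (2*m+2)"] i by (auto simp: zigzag_def)
  qed
  ultimately show ?D by blast
qed
lemma Delta_even_eq_chain_set: "k \<ge> 1 \<Longrightarrow> Delta_even k = chain_set zigzag (2*k)"
  unfolding Delta_even_def chain_set_def by (simp only: Delta_even_constraints_iff_zigzag)

lemma Delta_odd_eq_chain_set: "Delta_odd k = chain_set zigzag (2*k+1)"
  unfolding Delta_odd_def chain_set_def by (simp only: Delta_odd_constraints_iff_zigzag)

lemma nn_integral_Delta_even:
  assumes "k \<ge> 1"
  shows "(\<integral>\<^sup>+t \<in> Delta_even k. ennreal (\<Prod>i\<in>{1..k}. 1 / ((1 - t (2*i-1)) * t (2*i))) \<partial>cube_measure (2*k))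
       = ennreal (2 * (1 - 2 powr (1 - 2 * real k)) * zeta (real (2*k)))"
proof -
  have "(\<integral>\<^sup>+t \<in> Delta_even k. ennreal (\<Prod>i\<in>{1..k}. 1 / ((1 - t (2*i-1)) * t (2*i))) \<partial>cube_measure (2*k))
      = (\<integral>\<^sup>+t \<in> chain_set zigzag (2*k). ennreal (\<Prod>j\<in>{1..2*k}. zigzag_weight j (t j)) \<partial>cube_measure (2*k))"
    unfolding Delta_even_eq_chain_set[OF assms] prod_zigzag_weight_even ..
  also have "\<dots> = (\<integral>\<^sup>+y. gen_even (k - 1) y \<partial>lborel)"
    using assms by (subst nn_integral_chain_set_zigzag) (simp_all add: zigzag_density_def)
  also have "\<dots> = zstar k 1"
    using assms by (simp add: nn_integral_gen_even)
  finally show ?thesis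
    unfolding zstar_1_eq_zeta[OF assms] .
qed

lemma nn_integral_Delta_odd:
  assumes "k \<ge> 1"
  shows "(\<integral>\<^sup>+t \<in> Delta_odd k.
            ennreal ((\<Prod>i\<in>{1..k}. 1 / ((1 - t (2*i-1)) * t (2*i))) * (1 / (1 - t (2*k+1)))) \<partial>cube_measure (2*k+1))
       = ennreal (2 * zeta (real (2*k+1)))"
proof -
  have "(\<integral>\<^sup>+t \<in> Delta_odd k.
          ennreal ((\<Prod>i\<in>{1..k}. 1 / ((1 - t (2*i-1)) * t (2*i))) * (1 / (1 - t (2*k+1)))) \<partial>cube_measure (2*k+1))
      = (\<integral>\<^sup>+t \<in> chain_set zigzag (2*k+1). ennreal (\<Prod>j\<in>{1..2*k+1}. zigzag_weight j (t j)) \<partial>cube_measure (2*k+1))"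
    unfolding Delta_odd_eq_chain_set prod_zigzag_weight_odd ..
  also have "\<dots> = (\<integral>\<^sup>+z. gen_odd k z \<partial>lborel)"
    by (subst nn_integral_chain_set_zigzag) (simp_all add: zigzag_density_def)
  finally show ?thesis
    unfolding nn_integral_gen_odd suminf_zstar_divide_eq_zeta[OF assms] .
qed

lemma ennreal_eq_inverse_mult:
  assumes "0 < c" "0 \<le> x"
  shows "ennreal x = ennreal (1 / c) * ennreal (c * x)"
  using assms by (simp add: ennreal_mult[symmetric])

theorem proposition5p1:
  fixes k :: nat
  assumes "k \<ge> 1"
  shows "(ennreal (zeta (real (2*k))) =
           ennreal (1 / (2 * (1 - 2 powr (1 - 2 * real k)))) *
           (\<integral>\<^sup>+ t \<in> Delta_even k.
              ennreal (\<Prod>i\<in>{1..k}. 1 / ((1 - t (2*i-1)) * t (2*i))) \<partial>cube_measure (2*k))) \<and>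
         (ennreal (zeta (real (2*k+1))) =
           ennreal (1/2) *
           (\<integral>\<^sup>+ t \<in> Delta_odd k.
              ennreal ((\<Prod>i\<in>{1..k}. 1 / ((1 - t (2*i-1)) * t (2*i))) * (1 / (1 - t (2*k+1))))
            \<partial>cube_measure (2*k+1)))"
proof -
  have "(2::real) powr (1 - 2 * real k) < 1"
    using assms by (simp add: powr_less_one)
  moreover have "0 \<le> zeta (real (2*k))" "0 \<le> zeta (real (2*k+1))"
    using assms by (intro zeta_of_nat_nonneg; simp)+
  ultimately show ?thesis
    unfolding nn_integral_Delta_even[OF assms] nn_integral_Delta_odd[OF assms]
    by (intro conjI ennreal_eq_inverse_mult) simp_all
qed

end
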